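(* If two augmentations $\epsilon_1,\epsilon_2:\mathrm{Cord}(L)\to k$ are equivalent under the dilation action, then their augmentation representations $(\rho^{sub}_{\epsilon_1},V^{sub}_{\epsilon_1})$ and $(\rho^{sub}_{\epsilon_2},V^{sub}_{\epsilon_2})$ are isomorphic as representations of $\pi_L=\pi_1(X\setminus L)$.
   Context: $X=\mathbb{R}^3$ or $S^3$, $k$ a field, $(L,L')$ an $r$-component framed oriented link with framed cord algebra $\mathrm{Cord}(L)$ (generated by homotopy classes of framed cords — paths in $X\setminus L$ with endpoints on the framing $L'$ — and $\lambda_s^{\pm1},\mu_s^{\pm1}$, modulo normalization, meridian, longitude and skein relations); an augmentation is a unital ring map $\epsilon:\mathrm{Cord}(L)\to k$. A dilation $d\in(k^* )^r$ acts by $\epsilon'(c_{st})=\frac{d_s}{d_t}\epsilon(c_{st})$ on cords from the framing of $K_s$ to that of $K_t$, fixing $\epsilon(\lambda_s),\epsilon(\mu_s)$. $L$ is the closure of an $n$-strand braid $B$, a disk $D$ transverse to the braid meets the framing at $x_1,\dots,x_n$, strand $i$ lies on $K_{\{i\}}$; $\gamma_{ij}$ is the straight segment in $D$ from $x_i$ to $x_j$ and $R$ is the $n\times n$ matrix $R_{ij}=\epsilon(\gamma_{ij})$ with columns $R_j\in k^n$. Fix a base point $x_0\in D$, a path $p_1$ from $x_1$ to $x_0$ and set $p_i=\gamma_{i1}\cdot p_1$. For $h\in\pi_1(X\setminus L,x_0)$ let $R^h$ be the $n\times n$ matrix with entries $R^h_{ij}=\epsilon(p_i^{-1}\cdot h\cdot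 p_j)$ (a framed cord from $x_i$ to $x_j$). The augmentation representation is $V^{sub}_\epsilon=\mathrm{Span}_k\{R_1,\dots,R_n\}\subset k^n$ with $\rho^{sub}_\epsilon(h)R_j:=R^h_j$ (the $j$-th column of $R^h$); by prior work this is a well-defined representation of $\pi_L$. *)

theory Defs
  imports "HOL-Algebra.Group"
begin

text \<open>Abstract model of the augmentation representation.
  Vectors of k^n are functions nat => k that vanish outside {1..n}.
  A matrix is a function nat => nat => k (entries M i j, 1 <= i,j <= n).\<close>

definition lincomb :: "nat \<Rightarrow> (nat \<Rightarrow> nat \<Rightarrow> 'k::field) \<Rightarrow> (nat \<Rightarrow> 'k) \<Rightarrow> (nat \<Rightarrow> 'k)" where
  "lincomb n M c = (\<lambda>i. if i \<in> {1..n} then (\<Sum>j\<in>{1..n}. c j * M i j) else 0)"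

definition Vsub :: "nat \<Rightarrow> (nat \<Rightarrow> nat \<Rightarrow> 'k::field) \<Rightarrow> (nat \<Rightarrow> 'k) set" where
  "Vsub n M = range (lincomb n M)"

definition rho_sub :: "nat \<Rightarrow> (nat \<Rightarrow> nat \<Rightarrow> 'k::field) \<Rightarrow> (nat \<Rightarrow> nat \<Rightarrow> 'k) \<Rightarrow> (nat \<Rightarrow> 'k) \<Rightarrow> (nat \<Rightarrow> 'k)" where
  "rho_sub n M Mh v = lincomb n Mh (SOME c. v = lincomb n M c)"

text \<open>Well-definedness of rho_sub (the result of prior work).\<close>
definition rho_well_defined :: "nat \<Rightarrow> (nat \<Rightarrow> nat \<Rightarrow> 'k::field) \<Rightarrow> (nat \<Rightarrow> nat \<Rightarrow> 'k) \<Rightarrow> bool" where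
  "rho_well_defined n M Mh \<longleftrightarrow> (\<forall>c. lincomb n M c = (\<lambda>_. 0) \<longrightarrow> lincomb n Mh c = (\<lambda>_. 0))"

definition rep_iso :: "('g, 'b) monoid_scheme \<Rightarrow> (nat \<Rightarrow> 'k::field) set \<Rightarrow> ('g \<Rightarrow> (nat \<Rightarrow> 'k) \<Rightarrow> (nat \<Rightarrow> 'k))
      \<Rightarrow> (nat \<Rightarrow> 'k) set \<Rightarrow> ('g \<Rightarrow> (nat \<Rightarrow> 'k) \<Rightarrow> (nat \<Rightarrow> 'k)) \<Rightarrow> bool" where
  "rep_iso G V1 r1 V2 r2 \<longleftrightarrow> (\<exists>T. bij_betw T V1 V2
      \<and> (\<forall>u\<in>V1. \<forall>v\<in>V1. T (\<lambda>i. u i + v i) = (\<lambda>i. T u i + T v i))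
      \<and> (\<forall>a. \<forall>u\<in>V1. T (\<lambda>i. a * u i) = (\<lambda>i. a * T u i))
      \<and> (\<forall>h\<in>carrier G. \<forall>v\<in>V1. T (r1 h v) = r2 h (T v)))"

end

theory Submission
  imports Defs
begin

text \<open>With \<open>D\<close> the diagonal matrix whose \<open>i\<close>-th entry is the dilation factor of the
  component carrying strand \<open>i\<close>, the dilation acts on both the matrix \<open>R\<close> and every
  matrix \<open>R\<^sup>h\<close> by conjugation with \<open>D\<close>. Hence \<open>D\<close> maps the column span of
  \<open>R\<^sub>\<epsilon>\<^sub>1\<close> onto that of \<open>R\<^sub>\<epsilon>\<^sub>2\<close>, sending \<open>R\<^sup>h\<close>-columns to \<open>R\<^sup>h\<close>-columns,
  and therefore intertwines the two representations.\<close>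

lemma lincomb_diff:
  "lincomb n M (\<lambda>j. c j - c' j) = (\<lambda>i. lincomb n M c i - lincomb n M c' i)"
  by (auto simp: lincomb_def algebra_simps sum_subtractf)

lemma lincomb_zero [simp]: "lincomb n M (\<lambda>_. 0) = (\<lambda>_. 0)"
  unfolding lincomb_def by auto

lemma lincomb_eq_if_rho_well_defined:
  assumes "rho_well_defined n M Mh" and "lincomb n M c = lincomb n M c'"
  shows "lincomb n Mh c = lincomb n Mh c'"
proof -
  have "lincomb n M (\<lambda>j. c j - c' j) = (\<lambda>_. 0)"
    using assms(2) by (simp add: lincomb_diff)
  then have "lincomb n Mh (\<lambda>j. c j - c' j) = (\<lambda>_. 0)"
    using assms(1) by (simp add: rho_well_defined_def)
  then show ?thesis
    by (simp add: lincomb_diff fun_eq_iff)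
qed

lemma rho_sub_lincomb:
  assumes "rho_well_defined n M Mh"
  shows "rho_sub n M Mh (lincomb n M c) = lincomb n Mh c"
proof -
  have "lincomb n M c = lincomb n M (SOME c'. lincomb n M c = lincomb n M c')"
    by (rule someI[of "\<lambda>c'. lincomb n M c = lincomb n M c'" c]) simp
  then show ?thesis
    unfolding rho_sub_def using lincomb_eq_if_rho_well_defined[OF assms] by metis
qed

definition diag_scale :: "nat \<Rightarrow> (nat \<Rightarrow> 'k::field) \<Rightarrow> (nat \<Rightarrow> 'k) \<Rightarrow> (nat \<Rightarrow> 'k)" where
  "diag_scale n D v = (\<lambda>i. if i \<in> {1..n} then D i * v i else 0)"

definition diag_conjugate ::
    "nat \<Rightarrow> (nat \<Rightarrow> 'k::field) \<Rightarrow> (nat \<Rightarrow> nat \<Rightarrow> 'k) \<Rightarrow> (nat \<Rightarrow> nat \<Rightarrow> 'k) \<Rightarrow> bool" where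
  "diag_conjugate n D M M' \<longleftrightarrow> (\<forall>i\<in>{1..n}. \<forall>j\<in>{1..n}. M' i j = D i / D j * M i j)"

lemma diag_scale_zero [simp]: "diag_scale n D (\<lambda>_. 0) = (\<lambda>_. 0)"
  by (auto simp: diag_scale_def)

lemma diag_scale_add: "diag_scale n D (\<lambda>i. u i + v i) = (\<lambda>i. diag_scale n D u i + diag_scale n D v i)"
  by (auto simp: diag_scale_def algebra_simps)

lemma diag_scale_scale: "diag_scale n D (\<lambda>i. a * u i) = (\<lambda>i. a * diag_scale n D u i)"
  by (auto simp: diag_scale_def algebra_simps)

lemma diag_scale_lincomb:
  assumes nz: "\<And>j. j \<in> {1..n} \<Longrightarrow> D j \<noteq> 0" and conj: "diag_conjugate n D M M'"
  shows "diag_scale n D (lincomb n M c) = lincomb n M' (\<lambda>j. c j * D j)"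
proof
  fix i
  show "diag_scale n D (lincomb n M c) i = lincomb n M' (\<lambda>j. c j * D j) i"
  proof (cases "i \<in> {1..n}")
    case i: True
    have "D i * (\<Sum>j\<in>{1..n}. c j * M i j) = (\<Sum>j\<in>{1..n}. c j * D j * M' i j)"
      unfolding sum_distrib_left
      using i conj nz by (intro sum.cong) (auto simp: diag_conjugate_def field_simps)
    then show ?thesis
      using i by (simp add: diag_scale_def lincomb_def)
  qed (auto simp: diag_scale_def lincomb_def)
qed

lemma lincomb_diag_conjugate:
  assumes nz: "\<And>j. j \<in> {1..n} \<Longrightarrow> D j \<noteq> 0" and conj: "diag_conjugate n D M M'"
  shows "lincomb n M' c = diag_scale n D (lincomb n M (\<lambda>j. c j / D j))"
proof -
  have "lincomb n M' c = lincomb n M' (\<lambda>j. c j / D j * D j)"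
    using nz by (auto simp: lincomb_def intro!: sum.cong)
  then show ?thesis
    using diag_scale_lincomb[OF nz conj] by simp
qed

lemma diag_scale_lincomb_eq_iff:
  assumes nz: "\<And>j. j \<in> {1..n} \<Longrightarrow> D j \<noteq> 0"
  shows "diag_scale n D (lincomb n M c) = diag_scale n D (lincomb n M c')
    \<longleftrightarrow> lincomb n M c = lincomb n M c'"
  using nz by (auto simp: fun_eq_iff diag_scale_def lincomb_def)

lemma bij_betw_diag_scale_Vsub:
  assumes nz: "\<And>j. j \<in> {1..n} \<Longrightarrow> D j \<noteq> 0" and conj: "diag_conjugate n D M M'"
  shows "bij_betw (diag_scale n D) (Vsub n M) (Vsub n M')"
proof (rule bij_betw_imageI)
  show "inj_on (diag_scale n D) (Vsub n M)"
    using diag_scale_lincomb_eq_iff[of n D M, OF nz] by (auto simp: Vsub_def inj_on_def)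
  show "diag_scale n D ` Vsub n M = Vsub n M'"
    unfolding Vsub_def
  proof
    show "diag_scale n D ` range (lincomb n M) \<subseteq> range (lincomb n M')"
      using diag_scale_lincomb[OF nz conj] by auto
    show "range (lincomb n M') \<subseteq> diag_scale n D ` range (lincomb n M)"
    proof
      fix v
      assume "v \<in> range (lincomb n M')"
      then obtain c where "v = diag_scale n D (lincomb n M (\<lambda>j. c j / D j))"
        using lincomb_diag_conjugate[OF nz conj] by blast
      then show "v \<in> diag_scale n D ` range (lincomb n M)"
        by blast
    qed
  qed
qed

lemma rho_well_defined_diag_conjugate:
  assumes nz: "\<And>j. j \<in> {1..n} \<Longrightarrow> D j \<noteq> 0"
    and conj: "diag_conjugate n D M M'" and conj_h: "diag_conjugate n D Mh Mh'"
    and wd: "rho_well_defined n M Mh"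
  shows "rho_well_defined n M' Mh'"
  unfolding rho_well_defined_def
proof (intro allI impI)
  fix c
  assume zero: "lincomb n M' c = (\<lambda>_. 0)"
  have "diag_scale n D (lincomb n M (\<lambda>j. c j / D j)) = lincomb n M' c"
    by (rule lincomb_diag_conjugate[OF nz conj, symmetric])
  also have "\<dots> = diag_scale n D (lincomb n M (\<lambda>_. 0))"
    using zero by simp
  finally have "diag_scale n D (lincomb n M (\<lambda>j. c j / D j)) = diag_scale n D (lincomb n M (\<lambda>_. 0))" .
  then have "lincomb n M (\<lambda>j. c j / D j) = (\<lambda>_. 0)"
    using diag_scale_lincomb_eq_iff[of n D M, OF nz] lincomb_zero by metis
  then have "lincomb n Mh (\<lambda>j. c j / D j) = (\<lambda>_. 0)"
    using wd by (simp add: rho_well_defined_def)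
  then show "lincomb n Mh' c = (\<lambda>_. 0)"
    using lincomb_diag_conjugate[OF nz conj_h, of c] by simp
qed

lemma diag_scale_rho_sub:
  assumes nz: "\<And>j. j \<in> {1..n} \<Longrightarrow> D j \<noteq> 0"
    and conj: "diag_conjugate n D M M'" and conj_h: "diag_conjugate n D Mh Mh'"
    and wd: "rho_well_defined n M Mh" and v: "v \<in> Vsub n M"
  shows "diag_scale n D (rho_sub n M Mh v) = rho_sub n M' Mh' (diag_scale n D v)"
proof -
  obtain c where c: "v = lincomb n M c"
    using v by (auto simp: Vsub_def)
  have wd': "rho_well_defined n M' Mh'"
    by (rule rho_well_defined_diag_conjugate[OF nz conj conj_h wd])
  show ?thesis
    using c rho_sub_lincomb[OF wd] rho_sub_lincomb[OF wd'] diag_scale_lincomb[OF nz conj]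
      diag_scale_lincomb[OF nz conj_h] by simp
qed

lemma rep_iso_diag_conjugate:
  assumes nz: "\<And>j. j \<in> {1..n} \<Longrightarrow> D j \<noteq> 0"
    and conj: "diag_conjugate n D M M'"
    and conj_h: "\<And>h. h \<in> carrier G \<Longrightarrow> diag_conjugate n D (Mh h) (Mh' h)"
    and wd: "\<And>h. h \<in> carrier G \<Longrightarrow> rho_well_defined n M (Mh h)"
  shows "rep_iso G (Vsub n M) (\<lambda>h. rho_sub n M (Mh h)) (Vsub n M') (\<lambda>h. rho_sub n M' (Mh' h))"
  unfolding rep_iso_def
  using bij_betw_diag_scale_Vsub[OF nz conj] diag_scale_add diag_scale_scale
    diag_scale_rho_sub[OF nz conj conj_h wd]
  by blast

theorem proposition4p11:
  fixes G :: "('g, 'b) monoid_scheme"   \<comment> \<open>pi_1(X \ L, x_0)\<close>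
    and n r :: nat                      \<comment> \<open>number of strands, number of components\<close>
    and comp :: "nat \<Rightarrow> nat"            \<comment> \<open>strand i lies on component K_(comp i)\<close>
    and src tgt :: "'c \<Rightarrow> nat"          \<comment> \<open>framed cords: start/end component\<close>
    and gam :: "nat \<Rightarrow> nat \<Rightarrow> 'c"        \<comment> \<open>the cord gamma_ij\<close>
    and cord :: "nat \<Rightarrow> nat \<Rightarrow> 'g \<Rightarrow> 'c" \<comment> \<open>the cord p_i^-1 . h . p_j\<close>
    and eps1 eps2 :: "'c \<Rightarrow> 'k::field"   \<comment> \<open>the two augmentations on framed cords\<close>
    and d :: "nat \<Rightarrow> 'k"                 \<comment> \<open>the dilation in (k^*)^r\<close>
  assumes "group G"
    and comp: "\<And>i. i \<in> {1..n} \<Longrightarrow> comp i \<in> {1..r}"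
    and endpoints: "\<And>c. src c \<in> {1..r} \<and> tgt c \<in> {1..r}"
    and gam: "\<And>i j. src (gam i j) = comp i \<and> tgt (gam i j) = comp j"
    and cord: "\<And>i j h. h \<in> carrier G \<Longrightarrow> src (cord i j h) = comp i \<and> tgt (cord i j h) = comp j"
    and d_nz: "\<And>s. s \<in> {1..r} \<Longrightarrow> d s \<noteq> 0"
    and dilation: "\<And>c. eps2 c = d (src c) / d (tgt c) * eps1 c"
    and wd: "\<And>h. h \<in> carrier G \<Longrightarrow>
              rho_well_defined n (\<lambda>i j. eps1 (gam i j)) (\<lambda>i j. eps1 (cord i j h))"
  shows "rep_iso G
           (Vsub n (\<lambda>i j. eps1 (gam i j)))
           (\<lambda>h. rho_sub n (\<lambda>i j. eps1 (gam i j)) (\<lambda>i j. eps1 (cord i j h)))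
           (Vsub n (\<lambda>i j. eps2 (gam i j)))
           (\<lambda>h. rho_sub n (\<lambda>i j. eps2 (gam i j)) (\<lambda>i j. eps2 (cord i j h)))"
proof (rule rep_iso_diag_conjugate[where D = "\<lambda>i. d (comp i)"])
  show "\<And>j. j \<in> {1..n} \<Longrightarrow> d (comp j) \<noteq> 0"
    using comp d_nz by blast
  show "diag_conjugate n (\<lambda>i. d (comp i)) (\<lambda>i j. eps1 (gam i j)) (\<lambda>i j. eps2 (gam i j))"
    by (simp add: diag_conjugate_def dilation gam)
  show "diag_conjugate n (\<lambda>i. d (comp i)) (\<lambda>i j. eps1 (cord i j h)) (\<lambda>i j. eps2 (cord i j h))"
    if "h \<in> carrier G" for h
    using that by (simp add: diag_conjugate_def dilation cord)
qed (rule wd)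

end
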